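(* If $L$ is the random walk Laplacian of a connected graph $G$ with $n_0$ vertices and eigenvalues $\lambda_1\le\lambda_2\le\dots\le\lambda_{n_0}$, then $\|L\|_{2,s}\ge\lambda_{s-1}$.
   Context: $L=I-D^{-1}A$ with $A$ the adjacency matrix and $D$ the degree matrix. For a matrix $\Phi$, $\|\Phi\|_{2,s}:=\max_{S\subset[n_0],\,|S|=s}\|\Phi_S\|_{2}$, where $\Phi_S$ is the column submatrix indexed by $S$ and $\|\cdot\|_2$ is the spectral (operator) norm. *)

theory Defs
  imports "Jordan_Normal_Form.Char_Poly" "Jordan_Normal_Form.DL_Submatrix"
begin

definition adj_mat :: "nat \<Rightarrow> (nat \<Rightarrow> nat \<Rightarrow> bool) \<Rightarrow> real mat" where
  "adj_mat n E = mat n n (\<lambda>(i,j). if E i j then 1 else 0)"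

definition degree :: "nat \<Rightarrow> (nat \<Rightarrow> nat \<Rightarrow> bool) \<Rightarrow> nat \<Rightarrow> real" where
  "degree n E i = real (card {j. j < n \<and> E i j})"

definition deg_mat :: "nat \<Rightarrow> (nat \<Rightarrow> nat \<Rightarrow> bool) \<Rightarrow> real mat" where
  "deg_mat n E = mat n n (\<lambda>(i,j). if i = j then degree n E i else 0)"

definition rw_laplacian :: "nat \<Rightarrow> (nat \<Rightarrow> nat \<Rightarrow> bool) \<Rightarrow> real mat" where
  "rw_laplacian n E = 1\<^sub>m n - mat n n (\<lambda>(i,j). (if E i j then 1 else 0) / degree n E i)"

definition simple_graph :: "nat \<Rightarrow> (nat \<Rightarrow> nat \<Rightarrow> bool) \<Rightarrow> bool" where
  "simple_graph n E \<longleftrightarrow> (\<forall>i j. E i j \<longrightarrow> i < n \<and> j < n) \<and> (\<forall>i j. E i j \<longrightarrow> E j i) \<and> (\<forall>i. \<not> E i i)"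

definition connected_graph :: "nat \<Rightarrow> (nat \<Rightarrow> nat \<Rightarrow> bool) \<Rightarrow> bool" where
  "connected_graph n E \<longleftrightarrow> (\<forall>u v. u < n \<longrightarrow> v < n \<longrightarrow> E\<^sup>*\<^sup>* u v)"

definition vec_norm2 :: "real vec \<Rightarrow> real" where
  "vec_norm2 x = sqrt (x \<bullet> x)"

definition spectral_norm :: "real mat \<Rightarrow> real" where
  "spectral_norm M = Sup {vec_norm2 (M *\<^sub>v x) | x. x \<in> carrier_vec (dim_col M) \<and> vec_norm2 x = 1}"

definition col_sparse_norm :: "real mat \<Rightarrow> nat \<Rightarrow> real" where
  "col_sparse_norm M s = Max {spectral_norm (submatrix M UNIV S) | S. S \<subseteq> {0..<dim_col M} \<and> card S = s}"

end

theory Submission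
  imports Defs "Jordan_Normal_Form.Schur_Decomposition"
begin

text \<open>
  Let \<open>d\<close> be the degree vector. The random walk Laplacian \<open>L = I - D\<^sup>-\<^sup>1A\<close> is self-adjoint
  for the weighted inner product \<open>\<langle>u, v\<rangle> = \<Sum>\<^sub>r d\<^sub>r u\<^sub>r v\<^sub>r\<close>, so Gram-Schmidt applied to the
  columns of a Schur triangularization of \<open>L\<close> yields an orthogonal eigenbasis
  \<open>q\<^sub>0, \<dots>, q\<^sub>n\<^sub>-\<^sub>1\<close> with \<open>L q\<^sub>j = \<lambda>\<^sub>j\<^sub>+\<^sub>1 q\<^sub>j\<close>. Some nonzero combination \<open>y\<close> of the
  \<open>n - s + 1\<close> eigenvectors \<open>q\<^sub>s\<^sub>-\<^sub>1, \<dots>, q\<^sub>n\<^sub>-\<^sub>1\<close> vanishes on the last \<open>n - s\<close> coordinates,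
  and its Rayleigh quotient is at least \<open>\<lambda>\<^sub>s\<close>. Such a \<open>y\<close> only sees the leading
  \<open>s \<times> s\<close> block \<open>T\<close> of \<open>L\<close>, which is again self-adjoint; iterating Cauchy-Schwarz
  shows that \<open>\<parallel>T\<^sup>m y\<parallel>\<close> grows at least like \<open>\<lambda>\<^sub>s\<^sup>m\<close>, while it grows at most like
  \<open>\<parallel>L\<^sub>S\<parallel>\<^sub>2\<^sup>m\<close> for the first \<open>s\<close> columns \<open>L\<^sub>S\<close> of \<open>L\<close>. Hence
  \<open>\<lambda>\<^sub>s\<^sub>-\<^sub>1 \<le> \<lambda>\<^sub>s \<le> \<parallel>L\<^sub>S\<parallel>\<^sub>2 \<le> \<parallel>L\<parallel>\<^sub>2\<^sub>,\<^sub>s\<close>.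
\<close>

lemma le_of_pow2_le_const_mult:
  fixes x z K :: real
  assumes "0 \<le> z" and bound: "\<And>j. x ^ (2 ^ j) \<le> K * z ^ (2 ^ j)"
  shows "x \<le> z"
proof (rule ccontr)
  assume "\<not> x \<le> z"
  then have "z < x" by simp
  show False
  proof (cases "z = 0")
    case True
    then show False using bound[of 0] \<open>z < x\<close> by simp
  next
    case False
    then have z: "0 < z" using assms(1) by simp
    then have "1 < x / z" using \<open>z < x\<close> by simp
    then obtain N where N: "K < (x / z) ^ N" using real_arch_pow by blast
    have "(x / z) ^ N \<le> (x / z) ^ (2 ^ N)"
      using \<open>1 < x / z\<close> less_exp[of N] by (intro power_increasing) simp_all
    also have "\<dots> \<le> K"
      using bound[of N] z by (simp add: power_divide divide_le_eq)
    finally show False using N by simp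
  qed
qed

lemma funpow_norm_bound:
  fixes T :: "(nat \<Rightarrow> real) \<Rightarrow> nat \<Rightarrow> real"
  assumes bound: "\<And>u. (\<Sum>r<n. (T u r)\<^sup>2) \<le> A\<^sup>2 * (\<Sum>r<n. (u r)\<^sup>2)"
  shows "(\<Sum>r<n. ((T ^^ k) u r)\<^sup>2) \<le> (A\<^sup>2) ^ k * (\<Sum>r<n. (u r)\<^sup>2)"
proof (induction k)
  case (Suc k)
  have "(\<Sum>r<n. ((T ^^ Suc k) u r)\<^sup>2) \<le> A\<^sup>2 * (\<Sum>r<n. ((T ^^ k) u r)\<^sup>2)"
    using bound by simp
  also have "\<dots> \<le> A\<^sup>2 * ((A\<^sup>2) ^ k * (\<Sum>r<n. (u r)\<^sup>2))"
    using Suc by (intro mult_left_mono) simp_all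
  finally show ?case by simp
qed simp

lemma index_mult_mat_sum:
  fixes A B :: "real mat"
  assumes "A \<in> carrier_mat nr m" "B \<in> carrier_mat m nc" "i < nr" "j < nc"
  shows "(A * B) $$ (i, j) = (\<Sum>k<m. A $$ (i, k) * B $$ (k, j))"
  using assms by (simp add: scalar_prod_def atLeast0LessThan)

lemma index_mult_mat_vec_sum:
  fixes A :: "real mat"
  assumes "A \<in> carrier_mat nr nc" "x \<in> carrier_vec nc" "i < nr"
  shows "(A *\<^sub>v x) $ i = (\<Sum>k<nc. A $$ (i, k) * x $ k)"
  using assms by (simp add: scalar_prod_def atLeast0LessThan)

lemma exists_nontrivial_solution:
  fixes f :: "nat \<Rightarrow> nat \<Rightarrow> real"
  assumes "m < k"
  obtains c where "\<exists>b<k. c b \<noteq> 0" and "\<And>a. a < m \<Longrightarrow> (\<Sum>b<k. f a b * c b) = 0"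
proof -
  define F where "F = mat\<^sub>r k k (\<lambda>a. if a = m then 0\<^sub>v k else vec k (f a))"
  have F: "F \<in> carrier_mat k k" unfolding F_def by simp
  have "det F = 0" unfolding F_def using assms by (intro det_row_0) auto
  then obtain v where v: "v \<in> carrier_vec k" "v \<noteq> 0\<^sub>v k" "F *\<^sub>v v = 0\<^sub>v k"
    using det_0_iff_vec_prod_zero_field[OF F] by blast
  show ?thesis
  proof
    show "\<exists>b<k. v $ b \<noteq> 0"
    proof (rule ccontr)
      assume "\<not> (\<exists>b<k. v $ b \<noteq> 0)"
      then have "v = 0\<^sub>v k" using v(1) by (intro eq_vecI) auto
      then show False using v(2) by simp
    qed
    show "(\<Sum>b<k. f a b * v $ b) = 0" if "a < m" for a
    proof -
      have "(\<Sum>b<k. f a b * v $ b) = (F *\<^sub>v v) $ a"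
        using that assms v(1)
        by (simp add: index_mult_mat_vec_sum[OF F] F_def scalar_prod_def atLeast0LessThan)
      then show ?thesis using v(3) that assms by simp
    qed
  qed
qed

lemma left_invertible_cols_independent:
  fixes P Q :: "real mat"
  assumes P: "P \<in> carrier_mat n n" and Q: "Q \<in> carrier_mat n n" and QP: "Q * P = 1\<^sub>m n"
    and comb: "\<And>r. r < n \<Longrightarrow> (\<Sum>j<n. c j * P $$ (r, j)) = 0" and i: "i < n"
  shows "c i = 0"
proof -
  have "c i = (\<Sum>j<n. (Q * P) $$ (i, j) * c j)"
    using QP i by (simp add: if_distrib[of "\<lambda>x. x * _"] cong: if_cong)
  also have "\<dots> = (\<Sum>j<n. \<Sum>r<n. Q $$ (i, r) * (c j * P $$ (r, j)))"
    by (simp add: index_mult_mat_sum[OF Q P i] sum_distrib_left sum_distrib_right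
        mult.commute mult.left_commute)
  also have "\<dots> = (\<Sum>r<n. \<Sum>j<n. Q $$ (i, r) * (c j * P $$ (r, j)))"
    by (rule sum.swap)
  also have "\<dots> = (\<Sum>r<n. Q $$ (i, r) * (\<Sum>j<n. c j * P $$ (r, j)))"
    by (simp add: sum_distrib_left)
  also have "\<dots> = 0" using comb by simp
  finally show ?thesis .
qed

lemma prod_atLeastAtMost_conv_prod_list: "(\<Prod>i\<in>{1..n}. f i) = prod_list (map f [1..<Suc n])"
proof -
  have "{1..n} = set [1..<Suc n]" by (simp only: set_upt atLeastLessThanSuc_atLeastAtMost)
  then show ?thesis by (simp only: prod.distinct_set_conv_list[OF distinct_upt])
qed

section \<open>Matrices acting on coordinate functions\<close>

text \<open>Vectors of \<open>\<real>\<^sup>n\<close> are functions \<open>nat \<Rightarrow> real\<close> of which only the values below \<open>n\<close> matter.\<close>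

definition lin_app :: "nat \<Rightarrow> (nat \<Rightarrow> nat \<Rightarrow> real) \<Rightarrow> (nat \<Rightarrow> real) \<Rightarrow> nat \<Rightarrow> real" where
  "lin_app n a u r = (\<Sum>k<n. a r k * u k)"

definition in_span :: "nat \<Rightarrow> (nat \<Rightarrow> nat \<Rightarrow> real) \<Rightarrow> nat \<Rightarrow> (nat \<Rightarrow> real) \<Rightarrow> bool" where
  "in_span n v j u \<longleftrightarrow> (\<exists>c. \<forall>r<n. u r = (\<Sum>i<j. c i * v i r))"

lemma lin_app_cong: "(\<And>k. k < n \<Longrightarrow> u k = u' k) \<Longrightarrow> lin_app n a u r = lin_app n a u' r"
  unfolding lin_app_def by simp

lemma lin_app_diff:
  "lin_app n a (\<lambda>k. u k - v k) r = lin_app n a u r - lin_app n a v r"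
  unfolding lin_app_def by (simp add: right_diff_distrib sum_subtractf)

lemma lin_app_sum:
  "lin_app n a (\<lambda>k. \<Sum>i\<in>I. x i * u i k) r = (\<Sum>i\<in>I. x i * lin_app n a (u i) r)"
  unfolding lin_app_def by (simp add: sum_distrib_left sum.swap[of _ I] mult.left_commute)

lemma lin_app_restrict:
  assumes "s \<le> n" and "\<And>k. s \<le> k \<Longrightarrow> k < n \<Longrightarrow> y k = 0"
  shows "lin_app n a y r = lin_app s a y r"
  unfolding lin_app_def by (rule sum.mono_neutral_right) (use assms in auto)

lemma in_span_cong: "in_span n v j u \<Longrightarrow> (\<And>r. r < n \<Longrightarrow> u r = u' r) \<Longrightarrow> in_span n v j u'"
  unfolding in_span_def by metis

lemma in_span_add: "in_span n v j u \<Longrightarrow> in_span n v j u' \<Longrightarrow> in_span n v j (\<lambda>r. u r + u' r)"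
  unfolding in_span_def
proof (elim exE)
  fix c c' assume "\<forall>r<n. u r = (\<Sum>i<j. c i * v i r)" "\<forall>r<n. u' r = (\<Sum>i<j. c' i * v i r)"
  then show "\<exists>c. \<forall>r<n. u r + u' r = (\<Sum>i<j. c i * v i r)"
    by (intro exI[of _ "\<lambda>i. c i + c' i"]) (simp add: sum.distrib distrib_right)
qed

lemma in_span_scale: "in_span n v j u \<Longrightarrow> in_span n v j (\<lambda>r. x * u r)"
  unfolding in_span_def
proof (elim exE)
  fix c assume "\<forall>r<n. u r = (\<Sum>i<j. c i * v i r)"
  then show "\<exists>c. \<forall>r<n. x * u r = (\<Sum>i<j. c i * v i r)"
    by (intro exI[of _ "\<lambda>i. x * c i"]) (simp add: sum_distrib_left mult.assoc)
qed

lemma in_span_sum: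
  assumes "finite K" "\<And>k. k \<in> K \<Longrightarrow> in_span n v j (u k)"
  shows "in_span n v j (\<lambda>r. \<Sum>k\<in>K. x k * u k r)"
  using assms
proof (induction K rule: finite_induct)
  case empty
  show ?case unfolding in_span_def by (intro exI[of _ "\<lambda>_. 0"]) simp
next
  case (insert k K)
  then have "in_span n v j (\<lambda>r. x k * u k r + (\<Sum>k\<in>K. x k * u k r))"
    by (intro in_span_add in_span_scale) auto
  then show ?case using insert by simp
qed

lemma in_span_mono: "in_span n v j u \<Longrightarrow> j \<le> j' \<Longrightarrow> in_span n v j' u"
  unfolding in_span_def
proof (elim exE)
  fix c assume c: "\<forall>r<n. u r = (\<Sum>i<j. c i * v i r)" and "j \<le> j'"
  then have "(\<Sum>i<j. c i * v i r) = (\<Sum>i<j'. (if i < j then c i else 0) * v i r)" for r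
    by (intro sum.mono_neutral_cong_left) auto
  then show "\<exists>c. \<forall>r<n. u r = (\<Sum>i<j'. c i * v i r)"
    using c by (intro exI[of _ "\<lambda>i. if i < j then c i else 0"]) simp
qed

lemma in_span_base: "i < j \<Longrightarrow> in_span n v j (v i)"
  unfolding in_span_def
proof (intro exI[of _ "\<lambda>k. if k = i then 1 else 0"] allI impI)
  fix r assume "i < j"
  then show "v i r = (\<Sum>k<j. (if k = i then 1 else 0) * v k r)"
    by (simp add: if_distrib[of "\<lambda>x. x * _"] cong: if_cong)
qed

lemma in_span_trans:
  assumes "\<And>i. i < j \<Longrightarrow> in_span n v' j' (v i)" and "in_span n v j u"
  shows "in_span n v' j' u"
proof -
  obtain c where c: "\<And>r. r < n \<Longrightarrow> u r = (\<Sum>i<j. c i * v i r)"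
    using assms(2) unfolding in_span_def by blast
  have "in_span n v' j' (\<lambda>r. \<Sum>i\<in>{..<j}. c i * v i r)"
    using assms(1) by (intro in_span_sum) auto
  then show ?thesis by (rule in_span_cong) (simp add: c)
qed

lemma in_span_lin_app:
  assumes "\<And>i. i < j \<Longrightarrow> in_span n v j (lin_app n a (v i))" and "in_span n v j u"
  shows "in_span n v j (lin_app n a u)"
proof -
  obtain c where c: "\<And>r. r < n \<Longrightarrow> u r = (\<Sum>i<j. c i * v i r)"
    using assms(2) unfolding in_span_def by blast
  have "in_span n v j (\<lambda>r. \<Sum>i\<in>{..<j}. c i * lin_app n a (v i) r)"
    using assms(1) by (intro in_span_sum) auto
  then show ?thesis
    by (rule in_span_cong) (simp add: lin_app_cong[of n u, OF c] lin_app_sum)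
qed

lemma schur_triangularization:
  fixes M :: "real mat"
  assumes M: "M \<in> carrier_mat n n" and cp: "char_poly M = (\<Prod>e\<leftarrow>es. [:- e, 1:])"
  obtains B P Q where "B \<in> carrier_mat n n" "P \<in> carrier_mat n n" "Q \<in> carrier_mat n n"
    "Q * P = 1\<^sub>m n" "M * P = P * B" "upper_triangular B" "diag_mat B = es"
proof -
  obtain B P Q where "schur_decomposition M es = (B, P, Q)"
    by (cases "schur_decomposition M es")
  from schur_decomposition[OF M cp this]
  have wit: "similar_mat_wit M B P Q" and "upper_triangular B" "diag_mat B = es"
    by blast+
  moreover have "n = dim_row M" using M by simp
  note wit_props = similar_mat_witD[OF this wit]
  have B: "B \<in> carrier_mat n n" and P: "P \<in> carrier_mat n n" and Q: "Q \<in> carrier_mat n n"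
    and QP: "Q * P = 1\<^sub>m n"
    using wit_props by blast+
  moreover have "M * P = P * B"
  proof -
    have "M * P = P * B * (Q * P)"
      using wit_props(3) B P Q by (simp add: assoc_mult_mat[of _ n n _ n _ n])
    then show ?thesis using QP B P by simp
  qed
  ultimately show ?thesis using that by blast
qed

lemma triangularizing_basis:
  fixes M :: "real mat"
  assumes M: "M \<in> carrier_mat n n" and cp: "char_poly M = (\<Prod>e\<leftarrow>es. [:- e, 1:])"
  obtains p b where
    "\<And>c. (\<And>r. r < n \<Longrightarrow> (\<Sum>i<n. c i * p i r) = 0) \<Longrightarrow> \<forall>i<n. c i = 0"
    "\<And>j r. j < n \<Longrightarrow> r < n \<Longrightarrow> lin_app n (\<lambda>r k. M $$ (r, k)) (p j) r = (\<Sum>k\<le>j. b k j * p k r)"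
    "\<And>j. j < n \<Longrightarrow> b j j = es ! j"
proof -
  obtain B P Q where B: "B \<in> carrier_mat n n" and P: "P \<in> carrier_mat n n"
    and Q: "Q \<in> carrier_mat n n" and QP: "Q * P = 1\<^sub>m n" and MP: "M * P = P * B"
    and ut: "upper_triangular B" and diag: "diag_mat B = es"
    using schur_triangularization[OF M cp] by blast
  define p where "p j r = P $$ (r, j)" for j r
  define b where "b k j = B $$ (k, j)" for k j
  show ?thesis
  proof
    show "\<forall>i<n. c i = 0" if "\<And>r. r < n \<Longrightarrow> (\<Sum>i<n. c i * p i r) = 0" for c
      using left_invertible_cols_independent[OF P Q QP] that unfolding p_def by blast
  next
    fix j r assume j: "j < n" and r: "r < n"
    have "lin_app n (\<lambda>r k. M $$ (r, k)) (p j) r = (P * B) $$ (r, j)"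
      unfolding lin_app_def p_def by (simp add: index_mult_mat_sum[OF M P r j, symmetric] MP)
    also have "\<dots> = (\<Sum>k<n. b k j * p k r)"
      by (simp add: index_mult_mat_sum[OF P B r j] b_def p_def mult.commute)
    also have "\<dots> = (\<Sum>k\<le>j. b k j * p k r)"
      using ut B j by (intro sum.mono_neutral_right) (auto simp: b_def upper_triangular_def)
    finally show "lin_app n (\<lambda>r k. M $$ (r, k)) (p j) r = (\<Sum>k\<le>j. b k j * p k r)" .
  next
    fix j assume "j < n"
    then show "b j j = es ! j" using B unfolding diag[symmetric] b_def diag_mat_def by simp
  qed
qed

section \<open>A weighted inner product\<close>

definition weighted_inner :: "nat \<Rightarrow> (nat \<Rightarrow> real) \<Rightarrow> (nat \<Rightarrow> real) \<Rightarrow> (nat \<Rightarrow> real) \<Rightarrow> real" where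
  "weighted_inner n w u v = (\<Sum>r<n. w r * u r * v r)"

lemma weighted_inner_restrict:
  assumes "s \<le> n" and "\<And>r. s \<le> r \<Longrightarrow> r < n \<Longrightarrow> y r = 0"
  shows "weighted_inner n w u y = weighted_inner s w u y"
  unfolding weighted_inner_def
  by (rule sum.mono_neutral_right) (use assms in auto)

locale weighted_space =
  fixes n :: nat and w :: "nat \<Rightarrow> real"
  assumes weight_pos: "r < n \<Longrightarrow> 0 < w r"
begin

abbreviation inner :: "(nat \<Rightarrow> real) \<Rightarrow> (nat \<Rightarrow> real) \<Rightarrow> real" where
  "inner \<equiv> weighted_inner n w"

lemma inner_commute: "inner u v = inner v u"
  unfolding weighted_inner_def by (simp add: ac_simps)

lemma inner_cong:
  "(\<And>r. r < n \<Longrightarrow> u r = u' r) \<Longrightarrow> (\<And>r. r < n \<Longrightarrow> v r = v' r) \<Longrightarrow> inner u v = inner u' v'"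
  unfolding weighted_inner_def by (rule sum.cong) auto

lemma inner_diff_right: "inner u (\<lambda>r. v r - v' r) = inner u v - inner u v'"
  unfolding weighted_inner_def by (simp add: right_diff_distrib sum_subtractf)

lemma inner_scale_right: "inner u (\<lambda>r. x * v r) = x * inner u v"
  unfolding weighted_inner_def by (simp add: sum_distrib_left ac_simps)

lemma inner_sum_right: "inner u (\<lambda>r. \<Sum>i\<in>I. x i * v i r) = (\<Sum>i\<in>I. x i * inner u (v i))"
  unfolding weighted_inner_def
  by (simp add: sum_distrib_left sum_distrib_right sum.swap[of _ "{..<n}"] ac_simps)

lemma inner_self_nonneg: "0 \<le> inner u u"
  unfolding weighted_inner_def
  by (intro sum_nonneg) (simp add: mult.assoc less_imp_le weight_pos)

lemma inner_self_eq_0: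
  assumes "inner u u = 0" and "r < n"
  shows "u r = 0"
proof -
  have "w r * u r * u r = 0"
    using assms unfolding weighted_inner_def
    by (subst (asm) sum_nonneg_eq_0_iff) (auto simp: mult.assoc less_imp_le weight_pos)
  then show ?thesis using weight_pos[OF assms(2)] by simp
qed

lemma inner_eq_0_if_self_eq_0: "inner u u = 0 \<Longrightarrow> inner u v = 0"
  unfolding weighted_inner_def[of n w u v] by (simp add: inner_self_eq_0)

lemma inner_Cauchy_Schwarz: "(inner u v)\<^sup>2 \<le> inner u u * inner v v"
proof (cases "inner v v = 0")
  case True
  then have "inner u v = 0"
    by (subst inner_commute) (rule inner_eq_0_if_self_eq_0)
  then show ?thesis using True by simp
next
  case False
  define x where "x = inner u v"
  define y where "y = inner v v"
  have "0 \<le> inner (\<lambda>r. y * u r - x * v r) (\<lambda>r. y * u r - x * v r)"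
    by (rule inner_self_nonneg)
  also have "\<dots> = (\<Sum>r<n. y * y * (w r * u r * u r) - 2 * x * y * (w r * u r * v r)
      + x * x * (w r * v r * v r))"
    unfolding weighted_inner_def by (intro sum.cong refl) (simp add: algebra_simps power2_eq_square)
  also have "\<dots> = y * y * inner u u - 2 * x * y * inner u v + x * x * inner v v"
    unfolding weighted_inner_def by (simp add: sum.distrib sum_subtractf sum_distrib_left)
  also have "\<dots> = y * (y * inner u u - x\<^sup>2)"
    by (simp add: x_def[symmetric] y_def[symmetric] power2_eq_square algebra_simps)
  finally show ?thesis
    using False inner_self_nonneg[of v] unfolding x_def y_def
    by (simp add: zero_le_mult_iff mult.commute)
qed

lemma inner_norm_equiv:
  obtains K where "0 \<le> K" and "\<And>u. inner u u \<le> K * (\<Sum>r<n. (u r)\<^sup>2)"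
    and "\<And>u. (\<Sum>r<n. (u r)\<^sup>2) \<le> K * inner u u"
proof
  define K where "K = (\<Sum>r<n. w r + 1 / w r)"
  show "0 \<le> K" unfolding K_def using weight_pos by (intro sum_nonneg) (simp add: add_nonneg_nonneg less_imp_le)
  have le_K: "w r \<le> K" "1 / w r \<le> K" if "r < n" for r
  proof -
    have "w r + 1 / w r \<le> K"
      unfolding K_def using that weight_pos by (intro member_le_sum) (auto simp: less_imp_le)
    moreover have "0 < 1 / w r" using weight_pos[OF that] by simp
    ultimately show "w r \<le> K" "1 / w r \<le> K" using weight_pos[OF that] by linarith+
  qed
  show "inner u u \<le> K * (\<Sum>r<n. (u r)\<^sup>2)" for u
    unfolding weighted_inner_def sum_distrib_left
    by (intro sum_mono) (simp add: le_K mult.assoc power2_eq_square mult_right_mono)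
  show "(\<Sum>r<n. (u r)\<^sup>2) \<le> K * inner u u" for u
    unfolding weighted_inner_def sum_distrib_left
  proof (intro sum_mono)
    fix r assume "r \<in> {..<n}"
    then have r: "r < n" by simp
    have "(u r)\<^sup>2 = 1 / w r * (w r * u r * u r)"
      using weight_pos[OF r] by (simp add: power2_eq_square)
    also have "\<dots> \<le> K * (w r * u r * u r)"
      using le_K(2)[OF r] weight_pos[OF r] by (intro mult_right_mono) (simp_all add: mult.assoc)
    finally show "(u r)\<^sup>2 \<le> K * (w r * u r * u r)" .
  qed
qed

lemma in_span_orthogonal_eq_0:
  assumes "in_span n v j u" and "\<And>i. i < j \<Longrightarrow> inner (v i) u = 0" and "r < n"
  shows "u r = 0"
proof -
  obtain c where c: "\<And>r. r < n \<Longrightarrow> u r = (\<Sum>i<j. c i * v i r)"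
    using assms(1) unfolding in_span_def by blast
  have "inner u u = inner u (\<lambda>r. \<Sum>i\<in>{..<j}. c i * v i r)"
    by (rule inner_cong) (simp_all add: c)
  also have "\<dots> = 0"
    using assms(2) by (simp add: inner_sum_right inner_commute[of u])
  finally show ?thesis using inner_self_eq_0 assms(3) by blast
qed

lemma inner_orthogonal_sum:
  assumes "finite K" and "\<And>i j. i \<in> K \<Longrightarrow> j \<in> K \<Longrightarrow> i \<noteq> j \<Longrightarrow> inner (v i) (v j) = 0"
  shows "inner (\<lambda>r. \<Sum>i\<in>K. x i * v i r) (\<lambda>r. \<Sum>j\<in>K. y j * v j r) = (\<Sum>i\<in>K. x i * y i * inner (v i) (v i))"
proof -
  have "inner (\<lambda>r. \<Sum>i\<in>K. x i * v i r) (\<lambda>r. \<Sum>j\<in>K. y j * v j r)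
      = (\<Sum>j\<in>K. y j * (\<Sum>i\<in>K. x i * inner (v j) (v i)))"
    by (simp add: inner_sum_right inner_commute[of "\<lambda>r. \<Sum>i\<in>K. x i * v i r"])
  also have "\<dots> = (\<Sum>j\<in>K. y j * (x j * inner (v j) (v j)))"
  proof (intro sum.cong refl)
    fix j assume "j \<in> K"
    then have "(\<Sum>i\<in>K. x i * inner (v j) (v i)) = x j * inner (v j) (v j)"
      using assms by (subst sum.remove[of K j]) (auto intro!: sum.neutral simp: inner_commute)
    then show "y j * (\<Sum>i\<in>K. x i * inner (v j) (v i)) = y j * (x j * inner (v j) (v j))"
      by simp
  qed
  finally show ?thesis by (simp add: ac_simps)
qed

lemma lin_app_self_adjoint:
  assumes "\<And>r k. r < n \<Longrightarrow> k < n \<Longrightarrow> w r * a r k = w k * a k r"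
  shows "inner (lin_app n a u) v = inner u (lin_app n a v)"
proof -
  have "inner (lin_app n a u) v = (\<Sum>r<n. \<Sum>k<n. w r * a r k * u k * v r)"
    unfolding weighted_inner_def lin_app_def
    by (simp add: sum_distrib_left sum_distrib_right mult.assoc mult.left_commute)
  also have "\<dots> = (\<Sum>r<n. \<Sum>k<n. w k * a k r * u k * v r)"
  proof (intro sum.cong refl)
    fix r k assume "r \<in> {..<n}" "k \<in> {..<n}"
    then show "w r * a r k * u k * v r = w k * a k r * u k * v r"
      using assms[of r k] by simp
  qed
  also have "\<dots> = (\<Sum>k<n. \<Sum>r<n. w k * a k r * u k * v r)"
    by (rule sum.swap)
  also have "\<dots> = inner u (lin_app n a v)"
    unfolding weighted_inner_def lin_app_def
    by (simp add: sum_distrib_left mult.assoc mult.left_commute)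
  finally show ?thesis .
qed

subsection \<open>Gram-Schmidt and an orthogonal eigenbasis\<close>

text \<open>A vanishing denominator makes its coefficient \<open>0\<close>; orthogonality holds regardless.\<close>

function gram_schmidt :: "(nat \<Rightarrow> nat \<Rightarrow> real) \<Rightarrow> nat \<Rightarrow> nat \<Rightarrow> real" where
  "gram_schmidt p j = (\<lambda>r. p j r - (\<Sum>i<j. inner (p j) (gram_schmidt p i)
      / inner (gram_schmidt p i) (gram_schmidt p i) * gram_schmidt p i r))"
  by auto
termination by (relation "measure (\<lambda>(p, j). j)") auto

declare gram_schmidt.simps [simp del]

lemma gram_schmidt_eq:
  "gram_schmidt p j r = p j r - (\<Sum>i<j. inner (p j) (gram_schmidt p i)
      / inner (gram_schmidt p i) (gram_schmidt p i) * gram_schmidt p i r)"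
  by (subst gram_schmidt.simps) simp

lemma gram_schmidt_orthogonal_less:
  "i < j \<Longrightarrow> inner (gram_schmidt p i) (gram_schmidt p j) = 0"
proof (induction j arbitrary: i rule: less_induct)
  case (less j)
  let ?q = "gram_schmidt p"
  define t where "t l = inner (p j) (?q l) / inner (?q l) (?q l)" for l
  have prev: "inner (?q i) (?q l) = 0" if "l < j" "l \<noteq> i" for l
  proof (cases "i < l")
    case True
    then show ?thesis using less.IH[OF that(1)] by blast
  next
    case False
    then have "l < i" using that(2) by simp
    then show ?thesis using less.IH[OF less.prems] inner_commute by metis
  qed
  have "inner (?q i) (?q j) = inner (?q i) (\<lambda>r. p j r - (\<Sum>l\<in>{..<j}. t l * ?q l r))"
    by (rule inner_cong) (simp_all add: gram_schmidt_eq[of p j] t_def)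
  also have "\<dots> = inner (?q i) (p j) - (\<Sum>l<j. t l * inner (?q i) (?q l))"
    by (simp add: inner_diff_right inner_sum_right)
  also have "(\<Sum>l<j. t l * inner (?q i) (?q l)) = t i * inner (?q i) (?q i)"
    using less.prems prev by (subst sum.remove[of _ i]) (auto intro!: sum.neutral)
  also have "t i * inner (?q i) (?q i) = inner (?q i) (p j)"
    unfolding t_def using inner_eq_0_if_self_eq_0[of "?q i" "p j"]
    by (cases "inner (?q i) (?q i) = 0") (simp_all add: inner_commute)
  finally show ?case by simp
qed

lemma gram_schmidt_orthogonal:
  "i \<noteq> j \<Longrightarrow> inner (gram_schmidt p i) (gram_schmidt p j) = 0"
  using gram_schmidt_orthogonal_less inner_commute by (metis linorder_neqE_nat)

lemma gram_schmidt_residual_in_span: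
  "in_span n (gram_schmidt p) j (\<lambda>r. p j r - gram_schmidt p j r)"
proof -
  have "in_span n (gram_schmidt p) j (\<lambda>r. \<Sum>i\<in>{..<j}. inner (p j) (gram_schmidt p i)
      / inner (gram_schmidt p i) (gram_schmidt p i) * gram_schmidt p i r)"
    by (intro in_span_sum in_span_base) auto
  then show ?thesis by (rule in_span_cong) (simp add: gram_schmidt_eq[of p j])
qed

lemma gram_schmidt_in_span: "in_span n p j (\<lambda>r. gram_schmidt p j r - p j r)"
proof (induction j rule: less_induct)
  case (less j)
  have "in_span n p j (gram_schmidt p i)" if "i < j" for i
  proof -
    have "in_span n p j (\<lambda>r. (gram_schmidt p i r - p i r) + p i r)"
      using that by (intro in_span_add in_span_base in_span_mono[OF less.IH]) auto
    then show ?thesis by simp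
  qed
  then have "in_span n p j (\<lambda>r. \<Sum>i\<in>{..<j}. - (inner (p j) (gram_schmidt p i)
      / inner (gram_schmidt p i) (gram_schmidt p i)) * gram_schmidt p i r)"
    by (intro in_span_sum) auto
  then show ?case
    by (rule in_span_cong) (simp add: gram_schmidt_eq[of p j] sum_negf)
qed

lemma gram_schmidt_nonzero:
  assumes indep: "\<And>c. (\<And>r. r < n \<Longrightarrow> (\<Sum>i<m. c i * p i r) = 0) \<Longrightarrow> \<forall>i<m. c i = 0"
    and "j < m"
  shows "0 < inner (gram_schmidt p j) (gram_schmidt p j)"
proof (rule ccontr)
  assume "\<not> 0 < inner (gram_schmidt p j) (gram_schmidt p j)"
  then have "inner (gram_schmidt p j) (gram_schmidt p j) = 0"
    using inner_self_nonneg[of "gram_schmidt p j"] by simp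
  then have zero: "gram_schmidt p j r = 0" if "r < n" for r
    using inner_self_eq_0 that by blast
  obtain c where c: "\<And>r. r < n \<Longrightarrow> gram_schmidt p j r - p j r = (\<Sum>i<j. c i * p i r)"
    using gram_schmidt_in_span unfolding in_span_def by blast
  define c' where "c' i = (if i < j then c i else if i = j then 1 else 0)" for i
  have "\<forall>i<m. c' i = 0"
  proof (rule indep)
    fix r assume r: "r < n"
    have "(\<Sum>i<m. c' i * p i r) = (\<Sum>i<Suc j. c' i * p i r)"
      using \<open>j < m\<close> by (intro sum.mono_neutral_right) (auto simp: c'_def)
    also have "\<dots> = (\<Sum>i<j. c i * p i r) + p j r"
      by (simp add: c'_def)
    finally show "(\<Sum>i<m. c' i * p i r) = 0"
      using c[OF r] zero[OF r] by simp
  qed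
  then show False using \<open>j < m\<close> by (auto simp: c'_def)
qed

lemma eigen_residual_in_span:
  assumes tri: "\<And>r. r < n \<Longrightarrow> lin_app n a (p j) r = (\<Sum>k\<le>j. b k * p k r)"
    and eigen: "\<And>i r. i < j \<Longrightarrow> r < n \<Longrightarrow>
      lin_app n a (gram_schmidt p i) r = \<mu> i * gram_schmidt p i r"
  shows "in_span n (gram_schmidt p) j (\<lambda>r. lin_app n a (gram_schmidt p j) r - b j * gram_schmidt p j r)"
proof -
  let ?q = "gram_schmidt p"
  have p_prev: "in_span n ?q j (p i)" if "i < j" for i
  proof -
    have "in_span n ?q j (\<lambda>r. ?q i r + (p i r - ?q i r))"
      using that by (intro in_span_add in_span_base in_span_mono[OF gram_schmidt_residual_in_span]) auto
    then show ?thesis by simp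
  qed
  have Aq_prev: "in_span n ?q j (lin_app n a (?q i))" if "i < j" for i
    using in_span_scale[OF in_span_base[OF that], of n ?q "\<mu> i"]
    by (rule in_span_cong) (simp add: eigen that)
  have "in_span n ?q j (lin_app n a (\<lambda>k. ?q j k - p j k))"
    using Aq_prev in_span_trans[OF p_prev gram_schmidt_in_span] by (rule in_span_lin_app)
  moreover have "in_span n ?q j (\<lambda>r. \<Sum>k\<in>{..<j}. b k * p k r)"
    using p_prev by (intro in_span_sum) auto
  moreover have "in_span n ?q j (\<lambda>r. b j * (p j r - ?q j r))"
    by (rule in_span_scale[OF gram_schmidt_residual_in_span])
  ultimately have "in_span n ?q j (\<lambda>r. lin_app n a (\<lambda>k. ?q j k - p j k) r
      + (\<Sum>k\<in>{..<j}. b k * p k r) + b j * (p j r - ?q j r))"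
    by (intro in_span_add)
  moreover have "lin_app n a (\<lambda>k. ?q j k - p j k) r + (\<Sum>k\<in>{..<j}. b k * p k r)
      + b j * (p j r - ?q j r) = lin_app n a (?q j) r - b j * ?q j r" if "r < n" for r
    using tri[OF that] by (simp add: lin_app_diff lessThan_Suc_atMost[symmetric] right_diff_distrib)
  ultimately show ?thesis by (rule in_span_cong)
qed

lemma gram_schmidt_eigenvector:
  assumes sym: "\<And>r k. r < n \<Longrightarrow> k < n \<Longrightarrow> w r * a r k = w k * a k r"
    and tri: "\<And>j r. j < m \<Longrightarrow> r < n \<Longrightarrow> lin_app n a (p j) r = (\<Sum>k\<le>j. b k j * p k r)"
  shows "j < m \<Longrightarrow> r < n \<Longrightarrow> lin_app n a (gram_schmidt p j) r = b j j * gram_schmidt p j r"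
proof (induction j arbitrary: r rule: less_induct)
  case (less j)
  let ?q = "gram_schmidt p"
  have "inner (?q i) (\<lambda>r. lin_app n a (?q j) r - b j j * ?q j r) = 0" if "i < j" for i
  proof -
    have "inner (?q i) (lin_app n a (?q j)) = inner (lin_app n a (?q i)) (?q j)"
      by (rule lin_app_self_adjoint[OF sym, symmetric])
    also have "\<dots> = inner (\<lambda>r. b i i * ?q i r) (?q j)"
      using that less by (intro inner_cong) auto
    also have "\<dots> = 0"
      using gram_schmidt_orthogonal[of j i] that
      by (simp add: inner_commute[of "\<lambda>r. b i i * ?q i r"] inner_scale_right)
    finally show ?thesis
      using gram_schmidt_orthogonal_less[OF that] by (simp add: inner_diff_right inner_scale_right)
  qed
  moreover have "in_span n ?q j (\<lambda>r. lin_app n a (?q j) r - b j j * ?q j r)"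
    using less by (intro eigen_residual_in_span[where b = "\<lambda>k. b k j" and \<mu> = "\<lambda>i. b i i"] tri) auto
  ultimately show ?case
    using in_span_orthogonal_eq_0[of ?q j] less.prems by fastforce
qed

lemma orthogonal_eigenbasis:
  fixes M :: "real mat"
  assumes M: "M \<in> carrier_mat n n"
    and sym: "\<And>r k. r < n \<Longrightarrow> k < n \<Longrightarrow> w r * M $$ (r, k) = w k * M $$ (k, r)"
    and cp: "char_poly M = (\<Prod>e\<leftarrow>es. [:- e, 1:])"
  obtains q where "\<And>i j. i < n \<Longrightarrow> j < n \<Longrightarrow> i \<noteq> j \<Longrightarrow> inner (q i) (q j) = 0"
    and "\<And>j. j < n \<Longrightarrow> 0 < inner (q j) (q j)"
    and "\<And>j r. j < n \<Longrightarrow> r < n \<Longrightarrow> lin_app n (\<lambda>r k. M $$ (r, k)) (q j) r = es ! j * q j r"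
proof -
  obtain p b where indep: "\<And>c. (\<And>r. r < n \<Longrightarrow> (\<Sum>i<n. c i * p i r) = 0) \<Longrightarrow> \<forall>i<n. c i = 0"
    and tri: "\<And>j r. j < n \<Longrightarrow> r < n \<Longrightarrow> lin_app n (\<lambda>r k. M $$ (r, k)) (p j) r = (\<Sum>k\<le>j. b k j * p k r)"
    and diag: "\<And>j. j < n \<Longrightarrow> b j j = es ! j"
    using triangularizing_basis[OF M cp] by blast
  show ?thesis
  proof
    show "inner (gram_schmidt p i) (gram_schmidt p j) = 0" if "i \<noteq> j" for i j
      using that by (rule gram_schmidt_orthogonal)
    show "0 < inner (gram_schmidt p j) (gram_schmidt p j)" if "j < n" for j
      using indep that by (rule gram_schmidt_nonzero)
    show "lin_app n (\<lambda>r k. M $$ (r, k)) (gram_schmidt p j) r = es ! j * gram_schmidt p j r"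
      if "j < n" "r < n" for j r
      using gram_schmidt_eigenvector[OF sym tri that] diag[OF that(1)] by simp
  qed
qed

subsection \<open>Rayleigh quotients\<close>

lemma rayleigh_orthogonal_eigen_combination:
  fixes x :: "nat \<Rightarrow> real"
  assumes K: "finite K"
    and orth: "\<And>i j. i \<in> K \<Longrightarrow> j \<in> K \<Longrightarrow> i \<noteq> j \<Longrightarrow> inner (q i) (q j) = 0"
    and eigen: "\<And>i r. i \<in> K \<Longrightarrow> r < n \<Longrightarrow> lin_app n a (q i) r = \<mu> i * q i r"
    and bound: "\<And>i. i \<in> K \<Longrightarrow> c \<le> \<mu> i"
  defines "y \<equiv> \<lambda>r. \<Sum>i\<in>K. x i * q i r"
  shows "c * inner y y \<le> inner (lin_app n a y) y"
proof -
  have "c * inner y y = (\<Sum>i\<in>K. c * (x i * x i * inner (q i) (q i)))"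
    unfolding y_def by (simp add: inner_orthogonal_sum[OF K orth] sum_distrib_left)
  also have "\<dots> \<le> (\<Sum>i\<in>K. \<mu> i * (x i * x i * inner (q i) (q i)))"
    using bound inner_self_nonneg by (intro sum_mono mult_right_mono) simp_all
  also have "\<dots> = inner (\<lambda>r. \<Sum>i\<in>K. (x i * \<mu> i) * q i r) y"
    unfolding y_def by (subst inner_orthogonal_sum[OF K orth]) (auto simp: mult_ac)
  also have "\<dots> = inner (lin_app n a y) y"
    unfolding y_def by (rule inner_cong) (simp_all add: lin_app_sum eigen mult.assoc)
  finally show ?thesis .
qed

lemma exists_supported_rayleigh:
  assumes orth: "\<And>i j. i < n \<Longrightarrow> j < n \<Longrightarrow> i \<noteq> j \<Longrightarrow> inner (q i) (q j) = 0"
    and pos: "\<And>j. j < n \<Longrightarrow> 0 < inner (q j) (q j)"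
    and eigen: "\<And>j r. j < n \<Longrightarrow> r < n \<Longrightarrow> lin_app n a (q j) r = \<mu> j * q j r"
    and bound: "\<And>j. t \<le> j \<Longrightarrow> j < n \<Longrightarrow> c \<le> \<mu> j"
    and "t < s" and "s \<le> n"
  obtains y where "\<And>r. s \<le> r \<Longrightarrow> r < n \<Longrightarrow> y r = 0" and "0 < inner y y"
    and "c * inner y y \<le> inner (lin_app n a y) y"
proof -
  define k where "k = n - t"
  define q' where "q' b = q (t + b)" for b
  have kn: "t + b < n" if "b < k" for b using that \<open>t < s\<close> \<open>s \<le> n\<close> unfolding k_def by simp
  have "n - s < k" unfolding k_def using \<open>t < s\<close> \<open>s \<le> n\<close> by simp
  then obtain v where v0: "\<exists>b<k. v b \<noteq> 0"
    and vker: "\<And>i. i < n - s \<Longrightarrow> (\<Sum>b<k. q' b (s + i) * v b) = 0"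
    using exists_nontrivial_solution[of "n - s" k "\<lambda>i b. q' b (s + i)"] by blast
  define y where "y r = (\<Sum>b\<in>{..<k}. v b * q' b r)" for r
  have orth': "inner (q' i) (q' j) = 0" if "i \<in> {..<k}" "j \<in> {..<k}" "i \<noteq> j" for i j
    unfolding q'_def using that kn by (intro orth) auto
  have yy: "inner y y = (\<Sum>b\<in>{..<k}. v b * v b * inner (q' b) (q' b))"
    unfolding y_def by (rule inner_orthogonal_sum[OF _ orth']) auto
  show ?thesis
  proof
    show "y r = 0" if "s \<le> r" "r < n" for r
      using vker[of "r - s"] that by (simp add: y_def mult.commute)
    obtain b0 where b0: "b0 < k" "v b0 \<noteq> 0" using v0 by blast
    have "0 < v b0 * v b0" using b0(2) not_real_square_gt_zero by blast
    then have "0 < v b0 * v b0 * inner (q' b0) (q' b0)"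
      using pos[OF kn[OF b0(1)]] unfolding q'_def by simp
    moreover have "0 \<le> v b * v b * inner (q' b) (q' b)" for b
      using inner_self_nonneg by simp
    ultimately show "0 < inner y y"
      unfolding yy using b0(1) by (intro sum_pos2[of _ b0]) simp_all
    show "c * inner y y \<le> inner (lin_app n a y) y"
      unfolding y_def using orth' eigen bound kn unfolding q'_def
      by (intro rayleigh_orthogonal_eigen_combination) auto
  qed
qed

lemma self_adjoint_funpow:
  assumes "\<And>u v. inner (T u) v = inner u (T v)"
  shows "inner ((T ^^ k) u) v = inner u ((T ^^ k) v)"
proof (induction k arbitrary: v)
  case (Suc k)
  have "inner ((T ^^ Suc k) u) v = inner ((T ^^ k) u) (T v)"
    by (simp add: assms)
  also have "\<dots> = inner u ((T ^^ Suc k) v)"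
    by (simp add: Suc funpow_swap1)
  finally show ?case .
qed simp

lemma self_adjoint_funpow_double:
  assumes "\<And>u v. inner (T u) v = inner u (T v)"
  shows "inner ((T ^^ (k + k)) y) y = inner ((T ^^ k) y) ((T ^^ k) y)"
  using self_adjoint_funpow[OF assms, of k "(T ^^ k) y" y] by (simp add: funpow_add)

lemma rayleigh_doubling:
  assumes sa: "\<And>u v. inner (T u) v = inner u (T v)"
    and "0 \<le> \<mu>" and "0 < inner y y" and ray: "\<mu> * inner y y \<le> inner (T y) y"
  shows "\<mu> ^ (2 ^ j) * inner y y \<le> inner ((T ^^ (2 ^ j)) y) y"
proof (induction j)
  case (Suc j)
  let ?m = "2 ^ j :: nat"
  have "(\<mu> ^ ?m * inner y y)\<^sup>2 \<le> (inner ((T ^^ ?m) y) y)\<^sup>2"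
    using Suc \<open>0 \<le> \<mu>\<close> \<open>0 < inner y y\<close> by (intro power_mono) simp_all
  also have "\<dots> \<le> inner ((T ^^ ?m) y) ((T ^^ ?m) y) * inner y y"
    by (rule inner_Cauchy_Schwarz)
  also have "inner ((T ^^ ?m) y) ((T ^^ ?m) y) = inner ((T ^^ 2 ^ Suc j) y) y"
    using self_adjoint_funpow_double[OF sa] by (simp add: mult_2)
  finally have "\<mu> ^ (2 ^ Suc j) * inner y y * inner y y \<le> inner ((T ^^ 2 ^ Suc j) y) y * inner y y"
    by (simp add: power2_eq_square power_add mult_2 algebra_simps)
  then show ?case using \<open>0 < inner y y\<close> by simp
qed (use ray in simp)

lemma rayleigh_le_norm_bound:
  assumes sa: "\<And>u v. inner (T u) v = inner u (T v)"
    and bound: "\<And>u. (\<Sum>r<n. (T u r)\<^sup>2) \<le> A\<^sup>2 * (\<Sum>r<n. (u r)\<^sup>2)"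
    and "0 \<le> A" and ypos: "0 < inner y y" and ray: "\<mu> * inner y y \<le> inner (T y) y"
  shows "\<mu> \<le> A"
proof (cases "\<mu> \<le> 0")
  case False
  obtain K where "0 \<le> K" and K1: "\<And>u. inner u u \<le> K * (\<Sum>r<n. (u r)\<^sup>2)"
    and K2: "\<And>u. (\<Sum>r<n. (u r)\<^sup>2) \<le> K * inner u u"
    using inner_norm_equiv by blast
  have "(\<mu>\<^sup>2) ^ (2 ^ j) \<le> K\<^sup>2 * (A\<^sup>2) ^ (2 ^ j)" for j
  proof -
    let ?z = "(T ^^ 2 ^ j) y"
    have "(\<mu>\<^sup>2) ^ (2 ^ j) * inner y y = \<mu> ^ (2 ^ Suc j) * inner y y"
      by (simp flip: power_mult)
    also have "\<dots> \<le> inner ((T ^^ 2 ^ Suc j) y) y"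
      using False by (intro rayleigh_doubling[OF sa _ ypos ray]) simp
    also have "\<dots> = inner ?z ?z"
      using self_adjoint_funpow_double[OF sa] by (simp add: mult_2)
    also have "\<dots> \<le> K * ((A\<^sup>2) ^ (2 ^ j) * (\<Sum>r<n. (y r)\<^sup>2))"
      using \<open>0 \<le> K\<close> by (intro order_trans[OF K1[of ?z]] mult_left_mono funpow_norm_bound[OF bound])
    also have "\<dots> \<le> K * ((A\<^sup>2) ^ (2 ^ j) * (K * inner y y))"
      using K2[of y] \<open>0 \<le> K\<close> by (intro mult_left_mono) simp_all
    also have "\<dots> = K\<^sup>2 * (A\<^sup>2) ^ (2 ^ j) * inner y y"
      by (simp add: power2_eq_square)
    finally show ?thesis
      using ypos by (simp only: mult_le_cancel_right_pos)
  qed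
  then have "\<mu>\<^sup>2 \<le> A\<^sup>2"
    by (rule le_of_pow2_le_const_mult[OF zero_le_power2])
  then show ?thesis using \<open>0 \<le> A\<close> by (rule power2_le_imp_le)
qed (use \<open>0 \<le> A\<close> in simp)

end

section \<open>Spectral norms\<close>

lemma Cauchy_Schwarz_sum:
  fixes a b :: "nat \<Rightarrow> real"
  shows "(\<Sum>k<n. a k * b k)\<^sup>2 \<le> (\<Sum>k<n. (a k)\<^sup>2) * (\<Sum>k<n. (b k)\<^sup>2)"
proof -
  interpret weighted_space n "\<lambda>_. 1" by unfold_locales simp
  show ?thesis using inner_Cauchy_Schwarz[of a b] by (simp add: weighted_inner_def power2_eq_square)
qed

lemma vec_norm2_eq: "vec_norm2 x = sqrt (\<Sum>i<dim_vec x. (x $ i)\<^sup>2)"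
  unfolding vec_norm2_def scalar_prod_def by (simp add: atLeast0LessThan power2_eq_square)

lemma vec_norm2_nonneg: "0 \<le> vec_norm2 x"
  unfolding vec_norm2_eq by (simp add: sum_nonneg)

lemma vec_norm2_sq: "(vec_norm2 x)\<^sup>2 = (\<Sum>i<dim_vec x. (x $ i)\<^sup>2)"
  unfolding vec_norm2_eq by (simp add: sum_nonneg)

lemma vec_norm2_smult: "vec_norm2 (c \<cdot>\<^sub>v x) = \<bar>c\<bar> * vec_norm2 x"
  unfolding vec_norm2_eq by (simp add: power_mult_distrib sum_distrib_left[symmetric] real_sqrt_mult)

lemma vec_norm2_eq_0_iff: "x \<in> carrier_vec n \<Longrightarrow> vec_norm2 x = 0 \<longleftrightarrow> x = 0\<^sub>v n"
  unfolding vec_norm2_eq by (auto simp: sum_nonneg_eq_0_iff intro!: eq_vecI)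

lemma spectral_norm_bdd_above:
  fixes M :: "real mat"
  assumes M: "M \<in> carrier_mat nr nc"
  shows "bdd_above {vec_norm2 (M *\<^sub>v x) | x. x \<in> carrier_vec (dim_col M) \<and> vec_norm2 x = 1}"
proof (rule bdd_aboveI, clarify)
  fix x :: "real vec" assume x: "x \<in> carrier_vec (dim_col M)" and nx: "vec_norm2 x = 1"
  then have xc: "x \<in> carrier_vec nc" using M by simp
  have "(vec_norm2 (M *\<^sub>v x))\<^sup>2 = (\<Sum>i<nr. (\<Sum>k<nc. M $$ (i, k) * x $ k)\<^sup>2)"
    using M xc by (simp add: vec_norm2_sq index_mult_mat_vec_sum del: index_mult_mat_vec)
  also have "\<dots> \<le> (\<Sum>i<nr. (\<Sum>k<nc. (M $$ (i, k))\<^sup>2) * (\<Sum>k<nc. (x $ k)\<^sup>2))"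
    by (intro sum_mono Cauchy_Schwarz_sum)
  also have "\<dots> = (\<Sum>i<nr. \<Sum>k<nc. (M $$ (i, k))\<^sup>2)"
    using nx xc vec_norm2_sq[of x] by simp
  finally show "vec_norm2 (M *\<^sub>v x) \<le> sqrt (\<Sum>i<nr. \<Sum>k<nc. (M $$ (i, k))\<^sup>2)"
    by (rule real_le_rsqrt)
qed

lemma spectral_norm_mult_vec_le:
  fixes M :: "real mat"
  assumes M: "M \<in> carrier_mat nr nc" and x: "x \<in> carrier_vec nc"
  shows "vec_norm2 (M *\<^sub>v x) \<le> spectral_norm M * vec_norm2 x"
proof (cases "x = 0\<^sub>v nc")
  case True
  then have "M *\<^sub>v x = 0\<^sub>v nr" using M by (intro eq_vecI) auto
  then show ?thesis using True by (simp add: vec_norm2_eq)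
next
  case False
  define c where "c = 1 / vec_norm2 x"
  have "vec_norm2 x \<noteq> 0" using False x vec_norm2_eq_0_iff by blast
  then have c: "0 < c" using vec_norm2_nonneg[of x] unfolding c_def by simp
  have "vec_norm2 (c \<cdot>\<^sub>v x) = 1" using c \<open>vec_norm2 x \<noteq> 0\<close> by (simp add: vec_norm2_smult c_def)
  then have "vec_norm2 (M *\<^sub>v (c \<cdot>\<^sub>v x)) \<le> spectral_norm M"
    unfolding spectral_norm_def using x M
    by (intro cSup_upper[OF _ spectral_norm_bdd_above[OF M]]) auto
  moreover have "M *\<^sub>v (c \<cdot>\<^sub>v x) = c \<cdot>\<^sub>v (M *\<^sub>v x)" using M x by (simp add: mult_mat_vec)
  ultimately have "c * vec_norm2 (M *\<^sub>v x) \<le> spectral_norm M" using c by (simp add: vec_norm2_smult)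
  then show ?thesis using c \<open>vec_norm2 x \<noteq> 0\<close> vec_norm2_nonneg[of x]
    unfolding c_def by (simp add: field_simps)
qed

lemma spectral_norm_nonneg:
  fixes M :: "real mat"
  assumes M: "M \<in> carrier_mat nr nc" and "0 < nc"
  shows "0 \<le> spectral_norm M"
proof -
  have "vec_norm2 (unit_vec nc 0) = 1"
    using \<open>0 < nc\<close> by (simp add: vec_norm2_eq unit_vec_def if_distrib[of "\<lambda>x. x\<^sup>2"] cong: if_cong)
  then have "vec_norm2 (M *\<^sub>v unit_vec nc 0) \<le> spectral_norm M"
    unfolding spectral_norm_def using M
    by (intro cSup_upper[OF _ spectral_norm_bdd_above[OF M]]) auto
  then show ?thesis using vec_norm2_nonneg order_trans by blast
qed

lemma spectral_norm_le_col_sparse_norm: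
  assumes "S \<subseteq> {0..<dim_col M}" and "card S = s"
  shows "spectral_norm (submatrix M UNIV S) \<le> col_sparse_norm M s"
proof -
  have "finite {S. S \<subseteq> {0..<dim_col M} \<and> card S = s}" by simp
  then have "finite {spectral_norm (submatrix M UNIV S) | S. S \<subseteq> {0..<dim_col M} \<and> card S = s}"
    by (rule finite_image_set)
  then show ?thesis unfolding col_sparse_norm_def using assms by (intro Max_ge) auto
qed

lemma submatrix_leading_cols:
  assumes M: "M \<in> carrier_mat nr nc" and "s \<le> nc"
  shows "submatrix M UNIV {0..<s} = mat nr s (\<lambda>(i, j). M $$ (i, j))"
proof -
  have rows: "card {i. i < dim_row M \<and> i \<in> UNIV} = nr" using M by simp
  have "{j. j < dim_col M \<and> j \<in> {0..<s}} = {0..<s}" using M \<open>s \<le> nc\<close> by auto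
  then have cols: "card {j. j < dim_col M \<and> j \<in> {0..<s}} = s" by simp
  have pick: "pick {0..<s} j = j" if "j < s" for j
  proof -
    have "{a \<in> {0..<s}. a < j} = {0..<j}" using that by auto
    then show ?thesis using pick_card_in_set[of j "{0..<s}"] that by simp
  qed
  show ?thesis
    unfolding submatrix_def rows cols by (rule eq_matI) (auto simp: pick pick_UNIV)
qed

lemma leading_block_norm_bound:
  fixes M :: "real mat"
  assumes M: "M \<in> carrier_mat n n" and "s \<le> n"
  shows "(\<Sum>r<s. (lin_app s (\<lambda>r k. M $$ (r, k)) u r)\<^sup>2)
    \<le> (spectral_norm (submatrix M UNIV {0..<s}))\<^sup>2 * (\<Sum>r<s. (u r)\<^sup>2)"
proof -
  let ?A = "submatrix M UNIV {0..<s}"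
  have A: "?A \<in> carrier_mat n s" unfolding submatrix_leading_cols[OF M \<open>s \<le> n\<close>] by simp
  define x where "x = vec s u"
  have x: "x \<in> carrier_vec s" unfolding x_def by simp
  have A_index: "?A $$ (r, k) = M $$ (r, k)" if "r < n" "k < s" for r k
    using that by (simp add: submatrix_leading_cols[OF M \<open>s \<le> n\<close>])
  have Ax: "(?A *\<^sub>v x) $ r = lin_app s (\<lambda>r k. M $$ (r, k)) u r" if "r < n" for r
    using that by (simp only: index_mult_mat_vec_sum[OF A x that]) (simp add: A_index lin_app_def x_def)
  have "(\<Sum>r<s. (lin_app s (\<lambda>r k. M $$ (r, k)) u r)\<^sup>2) = (\<Sum>r<s. ((?A *\<^sub>v x) $ r)\<^sup>2)"
    using \<open>s \<le> n\<close> by (simp add: Ax)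
  also have "\<dots> \<le> (\<Sum>r<n. ((?A *\<^sub>v x) $ r)\<^sup>2)"
    using \<open>s \<le> n\<close> by (intro sum_mono2) auto
  also have "\<dots> = (vec_norm2 (?A *\<^sub>v x))\<^sup>2" using A by (simp add: vec_norm2_sq)
  also have "\<dots> \<le> (spectral_norm ?A * vec_norm2 x)\<^sup>2"
    by (intro power_mono spectral_norm_mult_vec_le[OF A x] vec_norm2_nonneg)
  also have "\<dots> = (spectral_norm ?A)\<^sup>2 * (\<Sum>r<s. (u r)\<^sup>2)"
    by (simp add: power_mult_distrib vec_norm2_sq x_def)
  finally show ?thesis .
qed

context weighted_space
begin

lemma rayleigh_le_col_sparse_norm:
  fixes M :: "real mat"
  assumes M: "M \<in> carrier_mat n n" and "0 < s" "s \<le> n"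
    and sym: "\<And>r k. r < n \<Longrightarrow> k < n \<Longrightarrow> w r * M $$ (r, k) = w k * M $$ (k, r)"
    and supp: "\<And>r. s \<le> r \<Longrightarrow> r < n \<Longrightarrow> y r = 0"
    and ypos: "0 < inner y y"
    and ray: "\<mu> * inner y y \<le> inner (lin_app n (\<lambda>r k. M $$ (r, k)) y) y"
  shows "\<mu> \<le> col_sparse_norm M s"
proof -
  let ?a = "\<lambda>r k. M $$ (r, k)"
  let ?A = "submatrix M UNIV {0..<s}"
  interpret lead: weighted_space s w using weight_pos \<open>s \<le> n\<close> by unfold_locales simp
  have restrict: "inner u y = lead.inner u y" for u
    using weighted_inner_restrict[OF \<open>s \<le> n\<close> supp] by simp
  have Ay: "inner (lin_app n ?a y) y = lead.inner (lin_app s ?a y) y"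
    unfolding restrict by (rule lead.inner_cong) (simp_all add: lin_app_restrict[OF \<open>s \<le> n\<close> supp])
  have "\<mu> \<le> spectral_norm ?A"
  proof (rule lead.rayleigh_le_norm_bound[where T = "lin_app s ?a" and y = y])
    show "lead.inner (lin_app s ?a u) v = lead.inner u (lin_app s ?a v)" for u v
      using sym \<open>s \<le> n\<close> by (intro lead.lin_app_self_adjoint) simp
    show "(\<Sum>r<s. (lin_app s ?a u r)\<^sup>2) \<le> (spectral_norm ?A)\<^sup>2 * (\<Sum>r<s. (u r)\<^sup>2)" for u
      by (rule leading_block_norm_bound[OF M \<open>s \<le> n\<close>])
    show "0 \<le> spectral_norm ?A"
      using \<open>0 < s\<close> by (intro spectral_norm_nonneg[of _ n s]) (simp add: submatrix_leading_cols[OF M \<open>s \<le> n\<close>])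
    show "0 < lead.inner y y" using ypos restrict by simp
    show "\<mu> * lead.inner y y \<le> lead.inner (lin_app s ?a y) y" using ray restrict Ay by simp
  qed
  also have "\<dots> \<le> col_sparse_norm M s"
    using M \<open>s \<le> n\<close> by (intro spectral_norm_le_col_sparse_norm) auto
  finally show ?thesis .
qed

lemma eigenvalue_le_col_sparse_norm:
  fixes M :: "real mat"
  assumes M: "M \<in> carrier_mat n n"
    and sym: "\<And>r k. r < n \<Longrightarrow> k < n \<Longrightarrow> w r * M $$ (r, k) = w k * M $$ (k, r)"
    and cp: "char_poly M = (\<Prod>e\<leftarrow>es. [:- e, 1:])"
    and bound: "\<And>j. s - 1 \<le> j \<Longrightarrow> j < n \<Longrightarrow> c \<le> es ! j"
    and "0 < s" and "s \<le> n"
  shows "c \<le> col_sparse_norm M s"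
proof -
  obtain q where orth: "\<And>i j. i < n \<Longrightarrow> j < n \<Longrightarrow> i \<noteq> j \<Longrightarrow> inner (q i) (q j) = 0"
    and pos: "\<And>j. j < n \<Longrightarrow> 0 < inner (q j) (q j)"
    and eigen: "\<And>j r. j < n \<Longrightarrow> r < n \<Longrightarrow> lin_app n (\<lambda>r k. M $$ (r, k)) (q j) r = es ! j * q j r"
    using orthogonal_eigenbasis[OF M sym cp] by blast
  have "s - 1 < s" using \<open>0 < s\<close> by simp
  with exists_supported_rayleigh[where \<mu> = "\<lambda>j. es ! j", OF orth pos eigen bound _ \<open>s \<le> n\<close>]
  obtain y where "\<And>r. s \<le> r \<Longrightarrow> r < n \<Longrightarrow> y r = 0" and "0 < inner y y"
    and "c * inner y y \<le> inner (lin_app n (\<lambda>r k. M $$ (r, k)) y) y"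
    by blast
  then show ?thesis by (intro rayleigh_le_col_sparse_norm[OF M \<open>0 < s\<close> \<open>s \<le> n\<close> sym])
qed

end

section \<open>The random walk Laplacian\<close>

lemma rw_laplacian_carrier: "rw_laplacian n E \<in> carrier_mat n n"
  unfolding rw_laplacian_def carrier_mat_def by simp

lemma degree_pos_if_edge:
  assumes "simple_graph n E" and "E r k"
  shows "0 < degree n E r"
proof -
  have "k \<in> {j. j < n \<and> E r j}" using assms unfolding simple_graph_def by blast
  then show ?thesis unfolding degree_def by (auto simp: card_gt_0_iff)
qed

lemma degree_pos_if_connected:
  assumes "simple_graph n E" and "connected_graph n E" and "2 \<le> n" and "r < n"
  shows "0 < degree n E r"
proof -
  define v where "v = (if r = 0 then 1 else (0 :: nat))"
  have v: "v < n" "v \<noteq> r" using assms(3,4) unfolding v_def by auto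
  then have "E\<^sup>*\<^sup>* r v" using assms(2,4) unfolding connected_graph_def by blast
  then obtain k where "E r k" by (cases rule: converse_rtranclpE) (use v in auto)
  then show ?thesis by (rule degree_pos_if_edge[OF assms(1)])
qed

lemma degree_mult_rw_laplacian:
  assumes "simple_graph n E" and "r < n" and "k < n"
  shows "degree n E r * rw_laplacian n E $$ (r, k)
    = (if r = k then degree n E r else 0) - (if E r k then 1 else 0)"
  using assms degree_pos_if_edge[OF assms(1), of r k]
  by (auto simp: rw_laplacian_def right_diff_distrib)

lemma degree_rw_laplacian_symmetric:
  assumes "simple_graph n E" and "r < n" and "k < n"
  shows "degree n E r * rw_laplacian n E $$ (r, k) = degree n E k * rw_laplacian n E $$ (k, r)"
proof -
  have "E r k = E k r" using assms(1) unfolding simple_graph_def by blast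
  then show ?thesis using assms by (simp add: degree_mult_rw_laplacian)
qed

theorem mainTheorem7:
  fixes n s :: nat and E :: "nat \<Rightarrow> nat \<Rightarrow> bool" and lam :: "nat \<Rightarrow> real"
  assumes "simple_graph n E" and "connected_graph n E"
    and "\<And>i j. 1 \<le> i \<Longrightarrow> i \<le> j \<Longrightarrow> j \<le> n \<Longrightarrow> lam i \<le> lam j"
    and "char_poly (rw_laplacian n E) = (\<Prod>i\<in>{1..n}. [:- lam i, 1:])"
    and "2 \<le> s" and "s \<le> n"
  shows "col_sparse_norm (rw_laplacian n E) s \<ge> lam (s - 1)"
proof -
  have s: "0 < s" "s \<le> n" and "2 \<le> n" using assms(5,6) by auto
  interpret weighted_space n "degree n E"
    using degree_pos_if_connected[OF assms(1,2) \<open>2 \<le> n\<close>] by unfold_locales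
  have "lam s \<le> col_sparse_norm (rw_laplacian n E) s"
  proof (rule eigenvalue_le_col_sparse_norm[where es = "map lam [1..<Suc n]", OF rw_laplacian_carrier _ _ _ s])
    show "degree n E r * rw_laplacian n E $$ (r, k) = degree n E k * rw_laplacian n E $$ (k, r)"
      if "r < n" "k < n" for r k
      using assms(1) that by (rule degree_rw_laplacian_symmetric)
    show "char_poly (rw_laplacian n E) = (\<Prod>e\<leftarrow>map lam [1..<Suc n]. [:- e, 1:])"
      using assms(4) by (simp only: prod_atLeastAtMost_conv_prod_list map_map comp_def)
    show "lam s \<le> map lam [1..<Suc n] ! j" if "s - 1 \<le> j" "j < n" for j
      using that s assms(3)[of s "Suc j"] by (simp add: nth_map_upt del: upt_Suc)
  qed
  moreover have "lam (s - 1) \<le> lam s" using assms(3,5,6) by simp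
  ultimately show ?thesis by simp
qed

end
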